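(* Let $K>0$ and $0<t\le K/(2C)$. Then the function $F(x)=\Phi^K(-t\log x)$ is convex on $(0,\infty)$; with $F(0):=\Phi^K(+\infty)=\lim_{s\to\infty}\Phi^K(s)$ it is convex and continuous on $[0,\infty)$.
   Context: Let $g:\mathbb R\to\mathbb R$ be an odd bounded $C^3$ function such that $g(x)=x$ on $[-1,1]$, $0<g'(x)\le1$ on $\mathbb R$, and there is a constant $C>0$ with $0\le-g''(x)\le Cg'(x)$ for $x\in[-1,\infty)$. For $K>0$ put $\phi^K(x)=Kg(x/K)$ and $\Phi^K(x)=\int_0^x(\phi^K)'(s)^2\,ds$ (which is bounded and nondecreasing, hence has a finite limit at $+\infty$). *)

theory Defs
  imports "HOL-Analysis.Analysis"
begin

definition phiK :: "(real \<Rightarrow> real) \<Rightarrow> real \<Rightarrow> real \<Rightarrow> real" where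
  "phiK g K x = K * g (x / K)"

definition PhiK :: "(real \<Rightarrow> real) \<Rightarrow> real \<Rightarrow> real \<Rightarrow> real" where
  "PhiK g K x =
     (if 0 \<le> x then integral {0..x} (\<lambda>s. (deriv (phiK g K) s)\<^sup>2)
      else - integral {x..0} (\<lambda>s. (deriv (phiK g K) s)\<^sup>2))"

definition Fext :: "(real \<Rightarrow> real) \<Rightarrow> real \<Rightarrow> real \<Rightarrow> real \<Rightarrow> real" where
  "Fext g K t x = (if x = 0 then Lim at_top (PhiK g K) else PhiK g K (- t * ln x))"

end

theory Submission
  imports Defs
begin

text \<open>
  Write \<open>\<Phi> = \<Phi>\<^sup>K\<close> and \<open>h = \<Phi>' = ((\<phi>\<^sup>K)')\<^sup>2\<close>, i.e. \<open>h s = g'(s/K)\<^sup>2\<close>.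
  For \<open>F(x) = \<Phi>(-t log x)\<close> one computes \<open>F''(x) = t/x\<^sup>2 \<cdot> (h + t h')(-t log x)\<close>,
  and \<open>(h + t h')(s) = g'(y) (g'(y) + (2t/K) g''(y))\<close> with \<open>y = s/K\<close>.
  The bracket is nonnegative: on \<open>[-1,\<infinity>)\<close> because \<open>-g'' \<le> C g'\<close> and \<open>2t/K \<le> 1/C\<close>,
  and below \<open>-1\<close> because \<open>g''\<close> is odd.
  Since \<open>0 < g' \<le> 1\<close>, \<open>\<Phi>\<close> is nondecreasing and \<open>\<Phi> \<le> \<phi>\<^sup>K\<close> on \<open>[0,\<infinity>)\<close>, so \<open>\<Phi>\<close> is
  bounded and has a limit at \<open>+\<infinity>\<close>; this makes \<open>F\<close> continuous at \<open>0\<close>, and convexity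
  passes to the closure.
\<close>

lemma has_real_derivative_oriented_integral:
  fixes h :: "real \<Rightarrow> real"
  assumes "continuous_on UNIV h"
  shows "((\<lambda>x. if 0 \<le> x then integral {0..x} h else - integral {x..0} h)
           has_real_derivative h x) (at x)"
proof -
  define a where "a = min x 0 - 1"
  define b where "b = max x 0 + 1"
  define G where "G y = integral {a..y} h - integral {a..0} h" for y
  have x: "x \<in> {a<..<b}" unfolding a_def b_def by auto
  have "(G has_real_derivative h x) (at x within {a..b})"
    unfolding G_def
    using integral_has_real_derivative[OF continuous_on_subset[OF assms] _, of a b x] x
    by (auto intro!: derivative_eq_intros)
  then have "(G has_real_derivative h x) (at x within {a<..<b})"
    by (rule has_field_derivative_subset) auto
  then have dG: "(G has_real_derivative h x) (at x)"
    using at_within_open[OF x] by simp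
  show ?thesis
  proof (rule has_field_derivative_transform_within_open[OF dG open_greaterThanLessThan x])
    fix y assume y: "y \<in> {a<..<b}"
    have int: "h integrable_on {c..d}" for c d
      using assms continuous_on_subset integrable_continuous_interval by blast
    show "G y = (if 0 \<le> y then integral {0..y} h else - integral {y..0} h)"
    proof (cases "0 \<le> y")
      case True
      have "integral {a..0} h + integral {0..y} h = integral {a..y} h"
        by (rule Henstock_Kurzweil_Integration.integral_combine) (use True int a_def in auto)
      then show ?thesis using True unfolding G_def by auto
    next
      case False
      have "integral {a..y} h + integral {y..0} h = integral {a..0} h"
        by (rule Henstock_Kurzweil_Integration.integral_combine) (use False int y in auto)
      then show ?thesis using False unfolding G_def by auto
    qed
  qed
qed

lemma odd_fun_deriv_even:
  assumes "\<And>x. f (- x) = - f x" and "\<And>x. (f has_real_derivative f' x) (at x)"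
  shows "f' (- x) = f' x"
proof -
  have "((\<lambda>x. f (- x)) has_real_derivative f' (- x) * (- 1)) (at x)"
    by (rule DERIV_chain2[OF assms(2)]) (auto intro!: derivative_eq_intros)
  moreover have "((\<lambda>x. f (- x)) has_real_derivative - f' x) (at x)"
    using DERIV_minus[OF assms(2)] by (simp add: assms(1))
  ultimately show ?thesis using DERIV_unique by fastforce
qed

lemma even_fun_deriv_odd:
  assumes "\<And>x. f (- x) = f x" and "\<And>x. (f has_real_derivative f' x) (at x)"
  shows "f' (- x) = - f' x"
proof -
  have "((\<lambda>x. f (- x)) has_real_derivative f' (- x) * (- 1)) (at x)"
    by (rule DERIV_chain2[OF assms(2)]) (auto intro!: derivative_eq_intros)
  moreover have "((\<lambda>x. f (- x)) has_real_derivative f' x) (at x)"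
    using assms by simp
  ultimately show ?thesis using DERIV_unique by fastforce
qed

lemma mono_bdd_above_tendsto_Sup:
  fixes f :: "'a::linorder \<Rightarrow> 'b::{conditionally_complete_linorder, linorder_topology}"
  assumes "mono f" and "bdd_above (range f)"
  shows "(f \<longlongrightarrow> Sup (range f)) at_top"
proof (rule increasing_tendsto)
  show "\<forall>\<^sub>F x in at_top. f x \<le> Sup (range f)"
    using cSup_upper[OF _ assms(2)] by (auto intro: always_eventually)
  fix y assume "y < Sup (range f)"
  then obtain x0 where "y < f x0"
    using less_cSup_iff[OF _ assms(2)] by auto
  then show "\<forall>\<^sub>F x in at_top. y < f x"
    unfolding eventually_at_top_linorder by (meson assms(1) monoD order_less_le_trans)
qed

lemma convex_on_cong:
  assumes "\<And>x. x \<in> S \<Longrightarrow> f x = g x"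
  shows "convex_on S f \<longleftrightarrow> convex_on S g"
  using assms by (auto simp: convex_on_def convex_def)

lemma convex_on_closure:
  fixes f :: "'a::real_normed_vector \<Rightarrow> real"
  assumes conv: "convex_on S f" and cont: "continuous_on (closure S) f"
  shows "convex_on (closure S) f"
proof (rule convex_onI)
  show cS: "convex (closure S)"
    using convex_closure convex_on_imp_convex[OF conv] by blast
  fix u :: real and x y
  assume u: "0 < u" "u < 1" and xy: "x \<in> closure S" "y \<in> closure S"
  define G where "G p = f ((1 - u) *\<^sub>R fst p + u *\<^sub>R snd p) - (1 - u) * f (fst p) - u * f (snd p)"
    for p
  have comb: "(1 - u) *\<^sub>R a + u *\<^sub>R b \<in> closure S" if "a \<in> closure S" "b \<in> closure S" for a b
    using convexD[OF cS that, of "1 - u" u] u by auto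
  have "continuous_on (closure (S \<times> S)) G"
    unfolding G_def closure_Times
    by (intro continuous_intros continuous_on_compose2[OF cont]) (auto simp: comb)
  moreover have "G p \<le> 0" if "p \<in> S \<times> S" for p
    using convex_onD[OF conv, of u "fst p" "snd p"] that u unfolding G_def by auto
  ultimately have "G (x, y) \<le> 0"
    using continuous_le_on_closure[of "S \<times> S" G "(x, y)" 0] xy by (simp add: closure_Times)
  then show "f ((1 - u) *\<^sub>R x + u *\<^sub>R y) \<le> (1 - u) * f x + u * f y"
    unfolding G_def by simp
qed

lemma convex_on_comp_neg_ln:
  fixes \<Phi> h h' :: "real \<Rightarrow> real" and t :: real
  assumes d\<Phi>: "\<And>s. (\<Phi> has_real_derivative h s) (at s)"
    and dh: "\<And>s. (h has_real_derivative h' s) (at s)"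
    and t: "0 \<le> t"
    and nonneg: "\<And>s. 0 \<le> h s + t * h' s"
  shows "convex_on {0<..} (\<lambda>x. \<Phi> (- t * ln x))"
proof (rule f''_ge0_imp_convex)
  fix x :: real assume "x \<in> {0<..}"
  then have x: "0 < x" by simp
  have "((\<lambda>x. \<Phi> (- t * ln x)) has_real_derivative h (- t * ln x) * (- t * (1 / x))) (at x)"
    by (rule DERIV_chain2[OF d\<Phi>]) (use x in \<open>auto intro!: derivative_eq_intros\<close>)
  then show "((\<lambda>x. \<Phi> (- t * ln x)) has_real_derivative - t / x * h (- t * ln x)) (at x)"
    by (simp add: field_simps)
  have "((\<lambda>x. h (- t * ln x)) has_real_derivative h' (- t * ln x) * (- t * (1 / x))) (at x)"
    by (rule DERIV_chain2[OF dh]) (use x in \<open>auto intro!: derivative_eq_intros\<close>)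
  moreover have "((\<lambda>x. - t / x) has_real_derivative t / x\<^sup>2) (at x)"
    using x by (auto intro!: derivative_eq_intros simp: power2_eq_square)
  ultimately show "((\<lambda>x. - t / x * h (- t * ln x)) has_real_derivative
          t / x\<^sup>2 * (h (- t * ln x) + t * h' (- t * ln x))) (at x)"
    using DERIV_mult' x by (fastforce simp: field_simps power2_eq_square)
  show "0 \<le> t / x\<^sup>2 * (h (- t * ln x) + t * h' (- t * ln x))"
    using nonneg t by simp
qed simp

lemma continuous_on_comp_neg_ln_extension:
  fixes \<Phi> :: "real \<Rightarrow> real"
  assumes cont: "continuous_on UNIV \<Phi>" and lim: "(\<Phi> \<longlongrightarrow> L) at_top" and t: "0 < t"
  shows "continuous_on {0..} (\<lambda>x. if x = 0 then L else \<Phi> (- t * ln x))"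
    (is "continuous_on _ ?F")
  unfolding continuous_on_eq_continuous_within
proof
  fix x :: real assume "x \<in> {0..}"
  then consider "x = 0" | "0 < x" by fastforce
  then show "continuous (at x within {0..}) ?F"
  proof cases
    case 1
    have "filterlim (\<lambda>y. t * ln y) at_bot (at_right 0)"
      by (rule filterlim_tendsto_pos_mult_at_bot[OF tendsto_const t ln_at_0])
    then have "filterlim (\<lambda>y. - t * ln y) at_top (at_right 0)"
      using filterlim_uminus_at_top[of "\<lambda>y. - t * ln y"] by simp
    from filterlim_compose[OF lim this]
    have "((\<lambda>y. \<Phi> (- t * ln y)) \<longlongrightarrow> L) (at 0 within {0<..})" .
    then have "(?F \<longlongrightarrow> L) (at 0 within {0<..})"
      by (rule Lim_transform_eventually) (auto simp: eventually_at_filter)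
    moreover have "at (0::real) within {0..} = at 0 within {0<..}"
      by (rule at_within_nhd[of _ UNIV]) auto
    ultimately show ?thesis using 1 by (simp add: continuous_within)
  next
    case 2
    have "isCont (\<lambda>y. - t * ln y) x"
      using 2 by (auto intro!: continuous_intros)
    moreover have "isCont \<Phi> (- t * ln x)"
      using cont by (simp add: continuous_on_eq_continuous_at)
    ultimately have "isCont (\<lambda>y. \<Phi> (- t * ln y)) x"
      by (rule isCont_o2)
    moreover have "\<forall>\<^sub>F y in nhds x. \<Phi> (- t * ln y) = ?F y"
      using eventually_nhds_in_open[of "{0<..}" x] 2 by (simp add: eventually_mono)
    ultimately show ?thesis
      by (auto intro: continuous_at_imp_continuous_at_within simp: isCont_cong)
  qed
qed

lemma phiK_has_real_derivative:
  assumes "\<And>x. (g has_real_derivative g' x) (at x)" and "K \<noteq> 0"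
  shows "(phiK g K has_real_derivative g' (s / K)) (at s)"
proof -
  have "((\<lambda>x. K * g (x / K)) has_real_derivative K * (g' (s / K) * (1 / K))) (at s)"
    using assms(2) by (intro DERIV_cmult DERIV_chain2[OF assms(1)] derivative_eq_intros) auto
  then show ?thesis
    using assms(2) unfolding phiK_def[abs_def] by simp
qed

lemma deriv_phiK:
  assumes "\<And>x. (g has_real_derivative g' x) (at x)" and "K \<noteq> 0"
  shows "deriv (phiK g K) s = g' (s / K)"
  by (rule DERIV_imp_deriv[OF phiK_has_real_derivative[OF assms]])

lemma PhiK_has_real_derivative:
  assumes "\<And>x. (g has_real_derivative g' x) (at x)" and "continuous_on UNIV g'" and "K \<noteq> 0"
  shows "(PhiK g K has_real_derivative (g' (x / K))\<^sup>2) (at x)"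
proof -
  have "continuous_on UNIV (\<lambda>s. g' (s / K))"
    by (rule continuous_on_compose2[OF assms(2)]) (use assms(3) in \<open>auto intro!: continuous_intros\<close>)
  then have "continuous_on UNIV (\<lambda>s. (g' (s / K))\<^sup>2)"
    by (rule continuous_on_power)
  from has_real_derivative_oriented_integral[OF this]
  show ?thesis
    unfolding PhiK_def[abs_def] deriv_phiK[OF assms(1,3)] .
qed

lemma mono_PhiK:
  assumes "\<And>x. (g has_real_derivative g' x) (at x)" and "continuous_on UNIV g'" and "K \<noteq> 0"
  shows "mono (PhiK g K)"
proof (rule monoI)
  fix x y :: real assume "x \<le> y"
  then show "PhiK g K x \<le> PhiK g K y"
    by (rule DERIV_nonneg_imp_nondecreasing)
       (metis PhiK_has_real_derivative[OF assms] zero_le_power2)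
qed

lemma PhiK_le_phiK:
  assumes d: "\<And>x. (g has_real_derivative g' x) (at x)" and c: "continuous_on UNIV g'"
    and K: "0 < K" and g'_nonneg: "\<And>x. 0 \<le> g' x" and g'_le_1: "\<And>x. g' x \<le> 1"
    and "g 0 = 0" and "0 \<le> x"
  shows "PhiK g K x \<le> phiK g K x"
proof -
  have K0: "K \<noteq> 0"
    using K by simp
  have "PhiK g K x - phiK g K x \<le> PhiK g K 0 - phiK g K 0"
  proof (rule DERIV_nonpos_imp_nonincreasing[OF \<open>0 \<le> x\<close>])
    fix s
    have "((\<lambda>s. PhiK g K s - phiK g K s) has_real_derivative
            (g' (s / K))\<^sup>2 - g' (s / K)) (at s)"
      by (rule DERIV_diff[OF PhiK_has_real_derivative[OF d c K0] phiK_has_real_derivative[OF d K0]])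
    moreover have "(g' (s / K))\<^sup>2 \<le> g' (s / K)"
      using mult_left_le[OF g'_le_1 g'_nonneg] by (simp add: power2_eq_square)
    ultimately show "\<exists>y. ((\<lambda>s. PhiK g K s - phiK g K s) has_real_derivative y) (at s) \<and> y \<le> 0"
      by auto
  qed
  then show ?thesis
    using \<open>g 0 = 0\<close> by (simp add: PhiK_def phiK_def)
qed

lemma bdd_above_PhiK:
  assumes d: "\<And>x. (g has_real_derivative g' x) (at x)" and c: "continuous_on UNIV g'"
    and K: "0 < K" and g'_nonneg: "\<And>x. 0 \<le> g' x" and g'_le_1: "\<And>x. g' x \<le> 1"
    and g0: "g 0 = 0" and bdd: "bounded (range g)"
  shows "bdd_above (range (PhiK g K))"
proof -
  obtain B where B: "\<And>x. \<bar>g x\<bar> \<le> B"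
    using bdd unfolding bounded_iff by auto
  have "PhiK g K x \<le> K * B" for x
  proof (cases "0 \<le> x")
    case True
    then have "PhiK g K x \<le> K * g (x / K)"
      using PhiK_le_phiK[OF d c K g'_nonneg g'_le_1 g0] by (simp add: phiK_def)
    also have "\<dots> \<le> K * B"
      using B[of "x / K"] K by (simp add: abs_le_iff)
    finally show ?thesis .
  next
    case False
    then have "PhiK g K x \<le> PhiK g K 0"
      using mono_PhiK[OF d c] K by (simp add: monoD)
    also have "\<dots> \<le> K * B"
      using B[of 0] K by (simp add: PhiK_def)
    finally show ?thesis .
  qed
  then show ?thesis by (intro bdd_aboveI[of _ "K * B"]) auto
qed

lemma deriv_add_scaled_second_deriv_nonneg:
  fixes g' g'' :: "real \<Rightarrow> real" and C c y :: real
  assumes odd: "\<And>x. g'' (- x) = - g'' x" and g'_nonneg: "\<And>x. 0 \<le> g' x"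
    and lower: "\<And>x. x \<ge> -1 \<Longrightarrow> 0 \<le> - g'' x"
    and upper: "\<And>x. x \<ge> -1 \<Longrightarrow> - g'' x \<le> C * g' x"
    and c: "0 \<le> c" "c * C \<le> 1"
  shows "0 \<le> g' y + c * g'' y"
proof (cases "y \<ge> -1")
  case True
  have "c * (- g'' y) \<le> c * (C * g' y)"
    using upper[OF True] c(1) by (rule mult_left_mono)
  also have "\<dots> \<le> g' y"
    using mult_right_mono[OF c(2) g'_nonneg[of y]] by (simp add: mult.assoc)
  finally show ?thesis by simp
next
  case False
  then have "0 \<le> g'' y"
    using lower[of "- y"] odd[of y] by simp
  then show ?thesis
    using g'_nonneg[of y] c(1) by simp
qed

lemma convex_on_PhiK_comp_neg_ln:
  fixes g g' g'' :: "real \<Rightarrow> real" and C K t :: real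
  assumes d1: "\<And>x. (g has_real_derivative g' x) (at x)"
    and d2: "\<And>x. (g' has_real_derivative g'' x) (at x)"
    and odd: "\<And>x. g'' (- x) = - g'' x" and g'_nonneg: "\<And>x. 0 \<le> g' x"
    and lower: "\<And>x. x \<ge> -1 \<Longrightarrow> 0 \<le> - g'' x"
    and upper: "\<And>x. x \<ge> -1 \<Longrightarrow> - g'' x \<le> C * g' x"
    and K: "0 < K" and t: "0 \<le> t" "2 * t * C \<le> K"
  shows "convex_on {0<..} (\<lambda>x. PhiK g K (- t * ln x))"
proof (rule convex_on_comp_neg_ln)
  have "continuous_on UNIV g'"
    using d2 by (meson DERIV_isCont continuous_at_imp_continuous_on)
  then show "(PhiK g K has_real_derivative (g' (s / K))\<^sup>2) (at s)" for s
    using PhiK_has_real_derivative[OF d1] K by simp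
  have "((\<lambda>s. g' (s / K)) has_real_derivative g'' (s / K) * (1 / K)) (at s)" for s
    by (rule DERIV_chain2[OF d2]) (use K in \<open>auto intro!: derivative_eq_intros\<close>)
  from DERIV_mult[OF this this]
  show "((\<lambda>s. (g' (s / K))\<^sup>2) has_real_derivative 2 * g' (s / K) * g'' (s / K) / K) (at s)" for s
    by (simp add: power2_eq_square algebra_simps)
  have c: "0 \<le> 2 * t / K" "2 * t / K * C \<le> 1"
    using t K by (simp_all add: field_simps)
  show "0 \<le> (g' (s / K))\<^sup>2 + t * (2 * g' (s / K) * g'' (s / K) / K)" for s
  proof -
    have "(g' (s / K))\<^sup>2 + t * (2 * g' (s / K) * g'' (s / K) / K)
        = g' (s / K) * (g' (s / K) + 2 * t / K * g'' (s / K))"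
      by (simp add: power2_eq_square algebra_simps)
    also have "\<dots> \<ge> 0"
      using g'_nonneg deriv_add_scaled_second_deriv_nonneg
        [where g' = g' and g'' = g'' and C = C and c = "2 * t / K", OF odd g'_nonneg lower upper c]
      by simp
    finally show ?thesis .
  qed
qed (use t in simp)

theorem mainTheorem13:
  fixes g g1 g2 g3 :: "real \<Rightarrow> real" and C K t :: real
  assumes odd: "\<And>x. g (- x) = - g x"
    and bdd: "bounded (range g)"
    and d1: "\<And>x. (g has_real_derivative g1 x) (at x)"
    and d2: "\<And>x. (g1 has_real_derivative g2 x) (at x)"
    and d3: "\<And>x. (g2 has_real_derivative g3 x) (at x)"
    and c3: "continuous_on UNIV g3"
    and id: "\<And>x. x \<in> {-1..1} \<Longrightarrow> g x = x"
    and g1pos: "\<And>x. 0 < g1 x"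
    and g1le: "\<And>x. g1 x \<le> 1"
    and Cpos: "C > 0"
    and g2a: "\<And>x. x \<ge> -1 \<Longrightarrow> 0 \<le> - g2 x"
    and g2b: "\<And>x. x \<ge> -1 \<Longrightarrow> - g2 x \<le> C * g1 x"
    and Kpos: "K > 0"
    and tpos: "0 < t"
    and tle: "t \<le> K / (2 * C)"
  shows "convex_on {0<..} (\<lambda>x. PhiK g K (- t * ln x)) \<and>
         convex_on {0..} (Fext g K t) \<and>
         continuous_on {0..} (Fext g K t)"
proof -
  have g1_nonneg: "0 \<le> g1 x" for x
    using g1pos less_imp_le by blast
  have g2_odd: "g2 (- x) = - g2 x" for x
    using even_fun_deriv_odd[OF odd_fun_deriv_even[OF odd d1] d2] .
  have cont_g1: "continuous_on UNIV g1"
    using d2 by (meson DERIV_isCont continuous_at_imp_continuous_on)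
  have K0: "K \<noteq> 0"
    using Kpos by simp
  have "2 * t * C \<le> K"
    using tle Cpos by (simp add: field_simps)
  then have conv: "convex_on {0<..} (\<lambda>x. PhiK g K (- t * ln x))"
    using convex_on_PhiK_comp_neg_ln[OF d1 d2 g2_odd g1_nonneg g2a g2b Kpos] tpos by simp
  have "bdd_above (range (PhiK g K))"
    using bdd_above_PhiK[OF d1 cont_g1 Kpos g1_nonneg g1le _ bdd] id[of 0] by simp
  then have "(PhiK g K \<longlongrightarrow> Lim at_top (PhiK g K)) at_top"
    using mono_bdd_above_tendsto_Sup[OF mono_PhiK[OF d1 cont_g1 K0]] tendsto_Lim
    by (metis trivial_limit_at_top_linorder)
  moreover have "continuous_on UNIV (PhiK g K)"
    using PhiK_has_real_derivative[OF d1 cont_g1 K0]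
    by (meson DERIV_isCont continuous_at_imp_continuous_on)
  ultimately have cont: "continuous_on {0..} (Fext g K t)"
    using continuous_on_comp_neg_ln_extension[OF _ _ tpos] unfolding Fext_def[abs_def] by blast
  have "convex_on {0<..} (Fext g K t)"
    using conv by (subst convex_on_cong[where g = "\<lambda>x. PhiK g K (- t * ln x)"]) (auto simp: Fext_def)
  then have "convex_on {0..} (Fext g K t)"
    using convex_on_closure[of "{0::real<..}"] cont by simp
  with conv cont show ?thesis by blast
qed

end
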